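(* Let $\rho:Y\to X$ be a local homeomorphism between locally compact Hausdorff spaces and $m\ge0$. Let $A^m=\{\frac1{m+1}(\delta_{y_0}+\dots+\delta_{y_m})\in P(Y): y_i\neq y_j\text{ for }i\neq j\}$ with the subspace topology of $P(Y)$, and $B^m=\{(y_0,\dots,y_m)\in Y^{\times_X^{m+1}}:y_i\ne y_j\text{ for }i\neq j\}/S_{m+1}$, where $Y^{\times_X^{m+1}}$ is the fibre product of $m+1$ copies of $Y$ over $X$ and the symmetric group $S_{m+1}$ acts by permutation; write $[y_0,\dots,y_m]$ for the class of $(y_0,\dots,y_m)$. Then: (1) the map $\phi:A^m\to B^m$, $\frac1{m+1}(\delta_{y_0}+\dots+\delta_{y_m})\mapsto[y_0,\dots,y_m]$ is a homeomorphism; (2) $\tilde\rho|_{A^m}:A^m\to X$ is a local homeomorphism; (3) if $(Y,\Delta)$ is an $X$-simplicial complex (with structure map $\rho$) satisfying hypothesis $(H_2)$, then $A^m\cap|\Delta|$ is closed in $A^m$.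
   Context: $P(Y)$ is the set of positive Radon measures $\mu$ on $Y$ with $\mu(Y)=1$ supported in a single fibre $\rho^{-1}(x)$, with the weak-$*$ topology from $C_c(Y,\mathbb R)$; $\tilde\rho(\mu)=x$ where $\rho_*\mu=\delta_x$. An $X$-simplicial complex is a pair $(Y,\Delta)$ with $\rho:Y\to X$ a local homeomorphism and $\Delta$ a family of finite (nonempty) subsets of $Y$ of bounded cardinality, each contained in some fibre $\rho^{-1}(x)$, and closed under taking nonempty subsets. Its geometric realization is $|\Delta|=\{\mu\in P(Y):\mathrm{supp}(\mu)\in\Delta\}$ with the subspace topology. Hypothesis $(H_2)$: whenever $(y^{(0)}_\lambda)_\lambda,\dots,(y^{(k)}_\lambda)_\lambda$ are nets in $Y$ converging to $y^{(0)},\dots,y^{(k)}$ and $\{y^{(0)}_\lambda,\dots,y^{(k)}_\lambda\}\in\Delta$ for all $\lambda$, then $\{y^{(0)},\dots,y^{(k)}\}\in\Delta$. *)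

theory Defs
  imports "HOL-Analysis.Analysis" "HOL-Probability.Probability"
begin

definition borel_of :: "'a topology \<Rightarrow> 'a measure" where
  "borel_of Y = sigma (topspace Y) {U. openin Y U}"

definition local_homeo :: "'a topology \<Rightarrow> 'b topology \<Rightarrow> ('a \<Rightarrow> 'b) \<Rightarrow> bool" where
  "local_homeo Y X f \<longleftrightarrow> f ` topspace Y \<subseteq> topspace X \<and>
     (\<forall>y\<in>topspace Y. \<exists>U. openin Y U \<and> y \<in> U \<and> openin X (f ` U) \<and>
        homeomorphic_map (subtopology Y U) (subtopology X (f ` U)) f)"

definition radon :: "'a topology \<Rightarrow> 'a measure \<Rightarrow> bool" where
  "radon Y \<mu> \<longleftrightarrow> space \<mu> = topspace Y \<and> sets \<mu> = sets (borel_of Y) \<and>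
     (\<forall>K. compactin Y K \<longrightarrow> emeasure \<mu> K < \<infinity>) \<and>
     (\<forall>B\<in>sets \<mu>. emeasure \<mu> B = (INF U\<in>{U. openin Y U \<and> B \<subseteq> U}. emeasure \<mu> U)) \<and>
     (\<forall>U. openin Y U \<longrightarrow> emeasure \<mu> U = (SUP K\<in>{K. compactin Y K \<and> K \<subseteq> U}. emeasure \<mu> K))"

definition supp :: "'a topology \<Rightarrow> 'a measure \<Rightarrow> 'a set" where
  "supp Y \<mu> = topspace Y - \<Union>{U. openin Y U \<and> emeasure \<mu> U = 0}"

definition fibre :: "'a topology \<Rightarrow> ('a \<Rightarrow> 'b) \<Rightarrow> 'b \<Rightarrow> 'a set" where
  "fibre Y \<rho> x = {y \<in> topspace Y. \<rho> y = x}"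

definition PY :: "'a topology \<Rightarrow> 'b topology \<Rightarrow> ('a \<Rightarrow> 'b) \<Rightarrow> 'a measure set" where
  "PY Y X \<rho> = {\<mu>. radon Y \<mu> \<and> emeasure \<mu> (topspace Y) = 1 \<and>
                  (\<exists>x\<in>topspace X. supp Y \<mu> \<subseteq> fibre Y \<rho> x)}"

definition Cc :: "'a topology \<Rightarrow> ('a \<Rightarrow> real) set" where
  "Cc Y = {f. continuous_map Y euclideanreal f \<and> compactin Y (Y closure_of {y\<in>topspace Y. f y \<noteq> 0})}"

definition PY_top :: "'a topology \<Rightarrow> 'b topology \<Rightarrow> ('a \<Rightarrow> 'b) \<Rightarrow> 'a measure topology" where
  "PY_top Y X \<rho> = subtopology
     (topology_generated_by {{\<mu>. integral\<^sup>L \<mu> f \<in> V} | f V. f \<in> Cc Y \<and> open V})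
     (PY Y X \<rho>)"

definition rho_tilde :: "'a topology \<Rightarrow> 'b topology \<Rightarrow> ('a \<Rightarrow> 'b) \<Rightarrow> 'a measure \<Rightarrow> 'b" where
  "rho_tilde Y X \<rho> \<mu> = (THE x. distr \<mu> (borel_of X) \<rho> = return (borel_of X) x)"

definition dirac_avg :: "'a topology \<Rightarrow> nat \<Rightarrow> (nat \<Rightarrow> 'a) \<Rightarrow> 'a measure" where
  "dirac_avg Y m t = measure_of (topspace Y) (sets (borel_of Y))
     (\<lambda>A. ennreal ((\<Sum>i\<le>m. indicator A (t i)) / real (m + 1)))"

text \<open>Fibre product Y^{x_X (m+1)} minus the fat diagonal, as a subspace of the product.\<close>
definition conf_top :: "'a topology \<Rightarrow> ('a \<Rightarrow> 'b) \<Rightarrow> nat \<Rightarrow> (nat \<Rightarrow> 'a) topology" where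
  "conf_top Y \<rho> m = subtopology (product_topology (\<lambda>i. Y) {..m})
     {t. inj_on t {..m} \<and> (\<forall>i\<le>m. \<forall>j\<le>m. \<rho> (t i) = \<rho> (t j))}"

text \<open>Class [y_0,...,y_m] of a tuple under S_{m+1}: represented by the set {y_0,...,y_m}.\<close>
definition conf_class :: "nat \<Rightarrow> (nat \<Rightarrow> 'a) \<Rightarrow> 'a set" where
  "conf_class m t = t ` {..m}"

definition B_top :: "'a topology \<Rightarrow> ('a \<Rightarrow> 'b) \<Rightarrow> nat \<Rightarrow> 'a set topology" where
  "B_top Y \<rho> m = topology (\<lambda>U. U \<subseteq> conf_class m ` topspace (conf_top Y \<rho> m) \<and>
     openin (conf_top Y \<rho> m) {t \<in> topspace (conf_top Y \<rho> m). conf_class m t \<in> U})"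

definition A_set :: "'a topology \<Rightarrow> 'b topology \<Rightarrow> ('a \<Rightarrow> 'b) \<Rightarrow> nat \<Rightarrow> 'a measure set" where
  "A_set Y X \<rho> m = {\<mu> \<in> PY Y X \<rho>. \<exists>t. inj_on t {..m} \<and> (\<forall>i\<le>m. t i \<in> topspace Y) \<and> \<mu> = dirac_avg Y m t}"

definition A_top :: "'a topology \<Rightarrow> 'b topology \<Rightarrow> ('a \<Rightarrow> 'b) \<Rightarrow> nat \<Rightarrow> 'a measure topology" where
  "A_top Y X \<rho> m = subtopology (PY_top Y X \<rho>) (A_set Y X \<rho> m)"

definition phi :: "'a topology \<Rightarrow> ('a \<Rightarrow> 'b) \<Rightarrow> nat \<Rightarrow> 'a measure \<Rightarrow> 'a set" where
  "phi Y \<rho> m \<mu> = (THE b. \<exists>t\<in>topspace (conf_top Y \<rho> m). \<mu> = dirac_avg Y m t \<and> b = conf_class m t)"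

definition X_simplicial_complex :: "'a topology \<Rightarrow> ('a \<Rightarrow> 'b) \<Rightarrow> 'a set set \<Rightarrow> bool" where
  "X_simplicial_complex Y \<rho> \<Delta> \<longleftrightarrow>
     (\<forall>\<sigma>\<in>\<Delta>. finite \<sigma> \<and> \<sigma> \<noteq> {} \<and> \<sigma> \<subseteq> topspace Y \<and> (\<exists>x. \<sigma> \<subseteq> fibre Y \<rho> x)) \<and>
     (\<exists>N. \<forall>\<sigma>\<in>\<Delta>. card \<sigma> \<le> N) \<and>
     (\<forall>\<sigma>\<in>\<Delta>. \<forall>\<tau>. \<tau> \<subseteq> \<sigma> \<and> \<tau> \<noteq> {} \<longrightarrow> \<tau> \<in> \<Delta>)"

definition geom_real :: "'a topology \<Rightarrow> 'b topology \<Rightarrow> ('a \<Rightarrow> 'b) \<Rightarrow> 'a set set \<Rightarrow> 'a measure set" where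
  "geom_real Y X \<rho> \<Delta> = {\<mu> \<in> PY Y X \<rho>. supp Y \<mu> \<in> \<Delta>}"

text \<open>Hypothesis (H2), with nets of (k+1)-tuples expressed as proper filters on lists:
  the net (y^(0)_l,...,y^(k)_l) is the (eventual) family of lists, component i is l!i.\<close>
definition H2 :: "'a topology \<Rightarrow> 'a set set \<Rightarrow> bool" where
  "H2 Y \<Delta> \<longleftrightarrow> (\<forall>(F :: 'a list filter) z. F \<noteq> bot \<and>
      eventually (\<lambda>l. length l = length z \<and> set l \<in> \<Delta>) F \<and>
      (\<forall>i<length z. limitin Y (\<lambda>l. l ! i) (z ! i) F) \<longrightarrow> set z \<in> \<Delta>)"

end

theory Submission
  imports Defs
begin

(*
  The configuration space of injective (m+1)-tuples in a fibre parametrises A^m via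
  t \<mapsto> (1/(m+1)) (\<delta>_{t 0} + ... + \<delta>_{t m}); the support of this measure is the set
  {t 0, ..., t m}, so phi is the support map and phi composed with the parametrisation is
  the quotient map defining B^m.  The weak-* topology sees supports through bump functions:
  the measures in A^m whose support meets a given open set form an open set.  Hence, if the
  points of a configuration are separated by disjoint open sets, every nearby measure has
  exactly one atom in each of them; so the parametrisation is open, hence a quotient map,
  and phi is a homeomorphism.  Taking the disjoint open sets to be sheets of \<rho>, a measure
  near \<mu> is recovered from its image x under rho_tilde by lifting x into every sheet, which
  inverts rho_tilde locally.  Finally (H2) says that the configurations spanning a simplex
  form a closed set, which descends to A^m through the quotient map.
*)

lemma space_borel_of [simp]: "space (borel_of Y) = topspace Y"
  unfolding borel_of_def by (rule space_measure_of) (auto dest: openin_subset)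

lemma sets_borel_of: "sets (borel_of Y) = sigma_sets (topspace Y) {U. openin Y U}"
  unfolding borel_of_def by (rule sets_measure_of) (auto dest: openin_subset)

lemma borel_of_open: "openin Y U \<Longrightarrow> U \<in> sets (borel_of Y)"
  by (auto simp: sets_borel_of)

lemma borel_of_closed: "closedin Y C \<Longrightarrow> C \<in> sets (borel_of Y)"
  by (metis borel_of_open closedin_def double_diff order_refl sets.compl_sets space_borel_of)

lemma borel_of_euclidean: "borel_of euclidean = borel"
  by (simp add: borel_of_def borel_def)

lemma measurable_borel_of:
  assumes "continuous_map Y X f"
  shows "f \<in> measurable (borel_of Y) (borel_of X)"
  unfolding borel_of_def[of X]
proof (rule measurable_measure_of)
  show "{U. openin X U} \<subseteq> Pow (topspace X)" by (auto dest: openin_subset)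
  show "f \<in> space (borel_of Y) \<rightarrow> topspace X"
    using assms by (auto simp: continuous_map_def)
  fix U assume "U \<in> {U. openin X U}"
  then have "openin Y {x \<in> topspace Y. f x \<in> U}"
    using assms by (auto simp: continuous_map_def)
  moreover have "f -` U \<inter> space (borel_of Y) = {x \<in> topspace Y. f x \<in> U}" by auto
  ultimately show "f -` U \<inter> space (borel_of Y) \<in> sets (borel_of Y)"
    by (simp add: borel_of_open)
qed

lemma borel_measurable_borel_of:
  "continuous_map Y euclideanreal f \<Longrightarrow> f \<in> borel_measurable (borel_of Y)"
  using measurable_borel_of[of Y euclidean f] by (simp add: borel_of_euclidean)

lemma closedin_Hausdorff_finite:
  "\<lbrakk>Hausdorff_space Y; finite S; S \<subseteq> topspace Y\<rbrakk> \<Longrightarrow> closedin Y S"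
  using compactin_imp_closedin finite_imp_compactin by blast

lemma sets_dirac_avg [simp]: "sets (dirac_avg Y m t) = sets (borel_of Y)"
  unfolding dirac_avg_def by (metis sets.sigma_sets_eq sets.space_closed sets_measure_of space_borel_of)

lemma space_dirac_avg [simp]: "space (dirac_avg Y m t) = topspace Y"
  unfolding dirac_avg_def by (metis sets.space_closed space_measure_of space_borel_of)

lemma measurable_uniform_count_measure_borel_of:
  "t ` {..m} \<subseteq> topspace Y \<Longrightarrow> t \<in> measurable (uniform_count_measure {..m}) (borel_of Y)"
  by (simp add: measurable_cong_sets[OF sets_uniform_count_measure_count_space refl] image_subset_iff_funcset)

lemma dirac_avg_eq_distr:
  assumes t: "t ` {..m} \<subseteq> topspace Y"
  shows "dirac_avg Y m t = distr (uniform_count_measure {..m}) (borel_of Y) t"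
proof -
  let ?N = "distr (uniform_count_measure {..m}) (borel_of Y) t"
  have "?N = measure_of (topspace Y) (sets (borel_of Y)) (emeasure ?N)"
    by (metis measure_of_of_measure sets_distr space_distr space_borel_of)
  also have "\<dots> = dirac_avg Y m t"
    unfolding dirac_avg_def
  proof (rule measure_of_eq)
    show "sets (borel_of Y) \<subseteq> Pow (topspace Y)"
      by (metis sets.space_closed space_borel_of)
    fix A assume "A \<in> sigma_sets (topspace Y) (sets (borel_of Y))"
    then have A: "A \<in> sets (borel_of Y)"
      by (metis sets.sigma_sets_eq space_borel_of)
    have "(\<Sum>i\<le>m. indicator A (t i)) = real (card (t -` A \<inter> {..m}))"
      by (simp add: indicator_def sum.If_cases Int_def conj_commute)
    moreover have "t \<in> measurable (uniform_count_measure {..m}) (borel_of Y)"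
      using t by (rule measurable_uniform_count_measure_borel_of)
    ultimately show "emeasure ?N A = ennreal ((\<Sum>i\<le>m. indicator A (t i)) / real (m + 1))"
      using A by (simp add: emeasure_distr space_uniform_count_measure emeasure_uniform_count_measure)
  qed
  finally show ?thesis by simp
qed

lemma emeasure_dirac_avg:
  assumes "t ` {..m} \<subseteq> topspace Y" and "A \<in> sets (borel_of Y)"
  shows "emeasure (dirac_avg Y m t) A = ennreal (real (card {i \<in> {..m}. t i \<in> A}) / real (Suc m))"
proof -
  have "t \<in> measurable (uniform_count_measure {..m}) (borel_of Y)"
    using assms(1) by (rule measurable_uniform_count_measure_borel_of)
  then have "emeasure (dirac_avg Y m t) A = emeasure (uniform_count_measure {..m}) (t -` A \<inter> {..m})"
    using assms by (simp add: dirac_avg_eq_distr emeasure_distr space_uniform_count_measure)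
  also have "t -` A \<inter> {..m} = {i \<in> {..m}. t i \<in> A}" by auto
  finally show ?thesis by (subst (asm) emeasure_uniform_count_measure) auto
qed

lemma integral_dirac_avg:
  assumes "t ` {..m} \<subseteq> topspace Y" and "continuous_map Y euclideanreal f"
  shows "integral\<^sup>L (dirac_avg Y m t) f = (\<Sum>i\<le>m. f (t i)) / real (Suc m)"
  using integral_distr[OF measurable_uniform_count_measure_borel_of borel_measurable_borel_of, OF assms]
  by (simp add: dirac_avg_eq_distr[OF assms(1)] integral_uniform_count_measure)

lemma emeasure_dirac_avg_space:
  assumes "t ` {..m} \<subseteq> topspace Y"
  shows "emeasure (dirac_avg Y m t) (topspace Y) = 1"
proof -
  have "{i \<in> {..m}. t i \<in> topspace Y} = {..m}"
    using assms by auto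
  then show ?thesis
    using assms by (simp add: emeasure_dirac_avg borel_of_open)
qed

lemma emeasure_dirac_avg_eq_0_iff:
  assumes "t ` {..m} \<subseteq> topspace Y" and "A \<in> sets (borel_of Y)"
  shows "emeasure (dirac_avg Y m t) A = 0 \<longleftrightarrow> t ` {..m} \<inter> A = {}"
  using assms by (auto simp: emeasure_dirac_avg ennreal_eq_0_iff divide_le_0_iff)

lemma emeasure_dirac_avg_cong:
  assumes "t ` {..m} \<subseteq> topspace Y" and "A \<in> sets (borel_of Y)" "B \<in> sets (borel_of Y)"
    and "t ` {..m} \<inter> A = t ` {..m} \<inter> B"
  shows "emeasure (dirac_avg Y m t) A = emeasure (dirac_avg Y m t) B"
proof -
  have "{i \<in> {..m}. t i \<in> A} = {i \<in> {..m}. t i \<in> B}"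
    using assms(4) by blast
  then show ?thesis
    using assms(1-3) by (simp add: emeasure_dirac_avg)
qed

lemma supp_dirac_avg:
  assumes "Hausdorff_space Y" and t: "t ` {..m} \<subseteq> topspace Y"
  shows "supp Y (dirac_avg Y m t) = t ` {..m}"
proof -
  have "openin Y (topspace Y - t ` {..m})"
    using assms by (auto intro!: closedin_Hausdorff_finite)
  moreover have "emeasure (dirac_avg Y m t) U = 0 \<longleftrightarrow> t ` {..m} \<inter> U = {}" if "openin Y U" for U
    using t that by (simp add: emeasure_dirac_avg_eq_0_iff borel_of_open)
  ultimately have "\<Union>{U. openin Y U \<and> emeasure (dirac_avg Y m t) U = 0} = topspace Y - t ` {..m}"
    by (auto dest: openin_subset)
  then show ?thesis
    using t by (auto simp: supp_def)
qed

lemma radon_dirac_avg: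
  assumes H: "Hausdorff_space Y" and t: "t ` {..m} \<subseteq> topspace Y"
  shows "radon Y (dirac_avg Y m t)"
  unfolding radon_def
proof (intro conjI allI impI ballI)
  let ?\<mu> = "dirac_avg Y m t"
  show "space ?\<mu> = topspace Y" "sets ?\<mu> = sets (borel_of Y)"
    by simp_all
  show "emeasure ?\<mu> K < \<infinity>" for K
    using emeasure_space[of ?\<mu> K] t
    by (simp add: emeasure_dirac_avg_space order.strict_trans1)
  fix B assume B: "B \<in> sets ?\<mu>"
  \<comment> \<open>Removing the finitely many atoms outside \<open>B\<close> gives an open set of the same measure.\<close>
  let ?U = "topspace Y - (t ` {..m} - B)"
  have U: "openin Y ?U"
    using H t by (auto intro!: closedin_Hausdorff_finite)
  have "emeasure ?\<mu> ?U = emeasure ?\<mu> B"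
    using B t by (intro emeasure_dirac_avg_cong borel_of_open[OF U]) auto
  moreover have "B \<subseteq> ?U"
    using B sets.sets_into_space by fastforce
  ultimately have "(INF U\<in>{U. openin Y U \<and> B \<subseteq> U}. emeasure ?\<mu> U) \<le> emeasure ?\<mu> B"
    using U by (metis (mono_tags, lifting) INF_lower mem_Collect_eq)
  moreover have "emeasure ?\<mu> B \<le> (INF U\<in>{U. openin Y U \<and> B \<subseteq> U}. emeasure ?\<mu> U)"
    by (rule INF_greatest) (auto intro!: emeasure_mono simp: borel_of_open)
  ultimately show "emeasure ?\<mu> B = (INF U\<in>{U. openin Y U \<and> B \<subseteq> U}. emeasure ?\<mu> U)"
    by (rule antisym[rotated])
next
  let ?\<mu> = "dirac_avg Y m t"
  fix U assume U: "openin Y U"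
  let ?K = "t ` {..m} \<inter> U"
  have K: "compactin Y ?K"
    using t by (intro finite_imp_compactin) auto
  have "emeasure ?\<mu> U = emeasure ?\<mu> ?K"
    using t U K H by (intro emeasure_dirac_avg_cong borel_of_open borel_of_closed compactin_imp_closedin) auto
  then have "emeasure ?\<mu> U \<le> (SUP K\<in>{K. compactin Y K \<and> K \<subseteq> U}. emeasure ?\<mu> K)"
    using K by (metis (mono_tags, lifting) SUP_upper inf_le2 mem_Collect_eq)
  moreover have "(SUP K\<in>{K. compactin Y K \<and> K \<subseteq> U}. emeasure ?\<mu> K) \<le> emeasure ?\<mu> U"
    by (rule SUP_least, rule emeasure_mono) (auto simp: borel_of_open U)
  ultimately show "emeasure ?\<mu> U = (SUP K\<in>{K. compactin Y K \<and> K \<subseteq> U}. emeasure ?\<mu> K)"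
    by (rule antisym)
qed

lemma dirac_avg_in_PY:
  assumes "Hausdorff_space Y" and t: "t ` {..m} \<subseteq> topspace Y"
    and "\<And>i. i \<le> m \<Longrightarrow> \<rho> (t i) = x" and "x \<in> topspace X"
  shows "dirac_avg Y m t \<in> PY Y X \<rho>"
proof -
  have "emeasure (dirac_avg Y m t) (topspace Y) = 1"
    using t by (rule emeasure_dirac_avg_space)
  moreover have "supp Y (dirac_avg Y m t) \<subseteq> fibre Y \<rho> x"
    using assms by (auto simp: supp_dirac_avg fibre_def)
  ultimately show ?thesis
    using assms radon_dirac_avg unfolding PY_def by blast
qed

lemma dirac_avg_eq_iff:
  assumes H: "Hausdorff_space Y"
    and t: "t ` {..m} \<subseteq> topspace Y" "inj_on t {..m}"
    and s: "s ` {..m} \<subseteq> topspace Y" "inj_on s {..m}"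
  shows "dirac_avg Y m t = dirac_avg Y m s \<longleftrightarrow> t ` {..m} = s ` {..m}"
proof
  assume "dirac_avg Y m t = dirac_avg Y m s"
  then show "t ` {..m} = s ` {..m}"
    using supp_dirac_avg[OF H t(1)] supp_dirac_avg[OF H s(1)] by simp
next
  assume eq: "t ` {..m} = s ` {..m}"
  have "card {i \<in> {..m}. f i \<in> A} = card (f ` {..m} \<inter> A)" if "inj_on f {..m}" for f :: "nat \<Rightarrow> 'a" and A
  proof -
    have "f ` {i \<in> {..m}. f i \<in> A} = f ` {..m} \<inter> A"
      by auto
    moreover have "inj_on f {i \<in> {..m}. f i \<in> A}"
      using that by (rule inj_on_subset) auto
    ultimately show ?thesis
      by (metis card_image)
  qed
  then show "dirac_avg Y m t = dirac_avg Y m s"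
    using t s eq by (intro measure_eqI) (simp_all add: emeasure_dirac_avg)
qed

lemma rho_tilde_dirac_avg:
  assumes "Hausdorff_space X" and \<rho>: "continuous_map Y X \<rho>"
    and t: "t ` {..m} \<subseteq> topspace Y" and fib: "\<And>i. i \<le> m \<Longrightarrow> \<rho> (t i) = x"
  shows "rho_tilde Y X \<rho> (dirac_avg Y m t) = x"
proof -
  have x: "x \<in> topspace X"
    using \<rho> t fib[of 0] by (auto simp: continuous_map_def)
  interpret prob_space "uniform_count_measure {..m :: nat}"
    by (rule prob_space_uniform_count_measure) auto
  have "distr (dirac_avg Y m t) (borel_of X) \<rho> = distr (uniform_count_measure {..m}) (borel_of X) (\<rho> \<circ> t)"
    using t by (simp add: dirac_avg_eq_distr distr_distr measurable_borel_of[OF \<rho>]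
        measurable_uniform_count_measure_borel_of)
  also have "\<dots> = distr (uniform_count_measure {..m}) (borel_of X) (\<lambda>_. x)"
    using fib by (intro distr_cong) (auto simp: space_uniform_count_measure)
  also have "\<dots> = return (borel_of X) x"
    using x by simp
  finally have distr_eq: "distr (dirac_avg Y m t) (borel_of X) \<rho> = return (borel_of X) x" .
  have "{x} \<in> sets (borel_of X)"
    using assms(1) x by (simp add: borel_of_closed closedin_Hausdorff_singleton)
  then have "x' = x" if "return (borel_of X) x' = return (borel_of X) x" for x'
    using arg_cong[OF that, of "\<lambda>M. emeasure M {x}"] by (simp add: indicator_def split: if_splits)
  then show ?thesis
    unfolding rho_tilde_def using distr_eq by (intro the_equality) auto
qed

lemma Hausdorff_space_disjoint_nbhds:
  assumes "Hausdorff_space Y" and "finite I" and "inj_on t I"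
    and U: "\<And>i. i \<in> I \<Longrightarrow> openin Y (U i) \<and> t i \<in> U i"
  obtains V where "\<And>i. i \<in> I \<Longrightarrow> openin Y (V i) \<and> t i \<in> V i \<and> V i \<subseteq> U i"
    and "disjoint_family_on V I"
proof -
  have "\<exists>PQ. openin Y (fst PQ) \<and> openin Y (snd PQ) \<and> t i \<in> fst PQ \<and> t j \<in> snd PQ \<and>
      disjnt (fst PQ) (snd PQ)" if "i \<in> I" "j \<in> I" "i \<noteq> j" for i j
  proof -
    have "t i \<noteq> t j"
      using \<open>inj_on t I\<close> that by (meson inj_onD)
    moreover have "t i \<in> topspace Y" "t j \<in> topspace Y"
      using U that openin_subset by blast+
    ultimately show ?thesis
      using assms(1) unfolding Hausdorff_space_def by fastforce
  qed
  then obtain PQ where PQ: "\<And>i j. \<lbrakk>i \<in> I; j \<in> I; i \<noteq> j\<rbrakk> \<Longrightarrow> openin Y (fst (PQ i j)) \<and>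
      openin Y (snd (PQ i j)) \<and> t i \<in> fst (PQ i j) \<and> t j \<in> snd (PQ i j) \<and>
      disjnt (fst (PQ i j)) (snd (PQ i j))"
    by metis
  define V where "V i = U i \<inter> ((\<Inter>j \<in> I - {i}. fst (PQ i j) \<inter> snd (PQ j i)) \<inter> topspace Y)" for i
  show thesis
  proof
    show "openin Y (V i) \<and> t i \<in> V i \<and> V i \<subseteq> U i" if "i \<in> I" for i
    proof (intro conjI)
      show "openin Y (V i)"
        unfolding V_def using U[OF that] PQ that \<open>finite I\<close> by (intro openin_Int openin_INT) auto
      show "t i \<in> V i"
        unfolding V_def using U[OF that] PQ that openin_subset[of Y "U i"] by auto
    qed (auto simp: V_def)
    show "disjoint_family_on V I"
      unfolding disjoint_family_on_def
    proof (intro ballI impI)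
      fix i j assume ij: "i \<in> I" "j \<in> I" "i \<noteq> j"
      then have "V i \<subseteq> fst (PQ i j)" "V j \<subseteq> snd (PQ i j)"
        unfolding V_def by auto
      then show "V i \<inter> V j = {}"
        using PQ[OF ij] by (auto simp: disjnt_def)
    qed
  qed
qed

lemma exists_Cc_bump:
  assumes "locally_compact_space Y" and "Hausdorff_space Y" and "openin Y V" and "y \<in> V"
  obtains f where "f \<in> Cc Y" "f y > 0" "\<And>z. f z \<ge> 0" "\<And>z. \<lbrakk>z \<in> topspace Y; f z \<noteq> 0\<rbrakk> \<Longrightarrow> z \<in> V"
proof -
  have "neighbourhood_base_of (compactin Y) Y"
    using assms locally_compact_space_neighbourhood_base by blast
  then obtain U K where U: "openin Y U" "compactin Y K" "y \<in> U" "U \<subseteq> K" "K \<subseteq> V"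
    using assms(3,4) unfolding neighbourhood_base_of by metis
  have "completely_regular_space Y"
    using assms locally_compact_regular_imp_completely_regular_space by blast
  then obtain g where g: "continuous_map Y euclideanreal g" "g y = 0" "g ` (topspace Y - U) \<subseteq> {1}"
    using U(1,3) unfolding completely_regular_space_alt' by metis
  define f where "f z = max 0 (1/2 - g z)" for z
  have "continuous_map Y euclideanreal f"
    unfolding f_def by (intro continuous_map_real_max continuous_map_diff g(1) continuous_map_const) auto
  \<comment> \<open>The support of \<open>f\<close> lies in the closed set \<open>{g \<le> 1/2} \<subseteq> U \<subseteq> K\<close>.\<close>
  let ?C = "{z \<in> topspace Y. g z \<in> {..1/2}}"
  have "closedin Y ?C"
    by (rule closedin_continuous_map_preimage[OF g(1)]) auto
  moreover have sub: "{z \<in> topspace Y. f z \<noteq> 0} \<subseteq> ?C" and "?C \<subseteq> U"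
    using g(3) by (force simp: f_def)+
  ultimately have "compactin Y (Y closure_of {z \<in> topspace Y. f z \<noteq> 0})"
    using closed_compactin[OF U(2)] U(4) by (meson closedin_closure_of closure_of_minimal order_trans)
  with \<open>continuous_map Y euclideanreal f\<close> have "f \<in> Cc Y"
    by (simp add: Cc_def)
  moreover have "f y > 0" "\<And>z. f z \<ge> 0"
    using g(2) by (simp_all add: f_def)
  moreover have "\<And>z. \<lbrakk>z \<in> topspace Y; f z \<noteq> 0\<rbrakk> \<Longrightarrow> z \<in> V"
    using sub \<open>?C \<subseteq> U\<close> U(4,5) by blast
  ultimately show thesis
    by (rule that)
qed

lemma limitin_continuous_map_nhdsin:
  assumes "continuous_map X Y f" and "a \<in> topspace X"
  shows "limitin Y f (f a) (inf (nhdsin X a) F)"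
  unfolding limitin_def
proof (intro conjI allI impI)
  show "f a \<in> topspace Y"
    using assms continuous_map_image_subset_topspace by blast
  fix U assume "openin Y U \<and> f a \<in> U"
  then have "openin X {x \<in> topspace X. f x \<in> U}" "a \<in> {x \<in> topspace X. f x \<in> U}"
    using assms by (auto intro: openin_continuous_map_preimage)
  then have "eventually (\<lambda>x. f x \<in> U) (nhdsin X a)"
    unfolding eventually_nhdsin by blast
  then show "eventually (\<lambda>x. f x \<in> U) (inf (nhdsin X a) F)"
    by (rule filter_leD[OF inf.cobounded1])
qed

lemma local_homeo_imp_continuous_map:
  assumes "local_homeo Y X \<rho>"
  shows "continuous_map Y X \<rho>"
proof (rule pasting_lemma[where I = "{U. openin Y U \<and> continuous_map (subtopology Y U) X \<rho>}"
      and T = id and f = "\<lambda>_. \<rho>"])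
  show "\<exists>U. U \<in> {U. openin Y U \<and> continuous_map (subtopology Y U) X \<rho>} \<and> y \<in> id U \<and> \<rho> y = \<rho> y"
    if "y \<in> topspace Y" for y
    using assms that unfolding local_homeo_def
    by (metis (mono_tags, lifting) continuous_map_in_subtopology homeomorphic_imp_continuous_map id_apply mem_Collect_eq)
qed auto

lemma local_homeo_sheet:
  assumes "local_homeo Y X \<rho>" and "openin Y N" and "y \<in> N"
  obtains V g where "openin Y V" "y \<in> V" "V \<subseteq> N" "openin X (\<rho> ` V)"
    "homeomorphic_maps (subtopology Y V) (subtopology X (\<rho> ` V)) \<rho> g"
proof -
  have "y \<in> topspace Y"
    using assms(2,3) by (meson openin_subset subsetD)
  then obtain U where U: "openin Y U" "y \<in> U" "openin X (\<rho> ` U)" "homeomorphic_map (subtopology Y U) (subtopology X (\<rho> ` U)) \<rho>"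
    using assms(1) unfolding local_homeo_def by blast
  let ?V = "U \<inter> N"
  have "U \<subseteq> topspace Y"
    using U(1) by (rule openin_subset)
  then have "\<rho> ` U \<subseteq> topspace X"
    using homeomorphic_imp_surjective_map[OF U(4)] by auto
  then have "\<rho> ` (topspace (subtopology Y U) \<inter> ?V) = topspace (subtopology X (\<rho> ` U)) \<inter> \<rho> ` ?V"
    using \<open>U \<subseteq> topspace Y\<close> by auto
  then have "homeomorphic_map (subtopology (subtopology Y U) ?V) (subtopology (subtopology X (\<rho> ` U)) (\<rho> ` ?V)) \<rho>"
    by (rule homeomorphic_map_subtopologies[OF U(4)])
  moreover have "U \<inter> ?V = ?V" "\<rho> ` U \<inter> \<rho> ` ?V = \<rho> ` ?V"
    by blast+
  ultimately have "homeomorphic_map (subtopology Y ?V) (subtopology X (\<rho> ` ?V)) \<rho>"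
    by (simp only: subtopology_subtopology)
  moreover have "openin X (\<rho> ` ?V)"
  proof -
    have "openin (subtopology Y U) ?V"
      using assms(2) by (rule openin_subtopology_Int2)
    then have "openin (subtopology X (\<rho> ` U)) (\<rho> ` ?V)"
      using homeomorphic_imp_open_map[OF U(4)] unfolding open_map_def by blast
    then show ?thesis
      using U(3) openin_trans_full by blast
  qed
  ultimately show thesis
    using that U assms(2,3) by (meson IntI homeomorphic_map_maps inf_le2 openin_Int)
qed

lemma local_homeo_disjoint_sheets:
  assumes \<rho>: "local_homeo Y X \<rho>" and "Hausdorff_space Y" and "finite I" and "inj_on t I"
    and "t ` I \<subseteq> topspace Y"
  obtains V g where "\<And>i. i \<in> I \<Longrightarrow> openin Y (V i) \<and> t i \<in> V i \<and> openin X (\<rho> ` V i) \<and>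
      homeomorphic_maps (subtopology Y (V i)) (subtopology X (\<rho> ` V i)) \<rho> (g i)"
    and "disjoint_family_on V I"
proof -
  obtain N where N: "\<And>i. i \<in> I \<Longrightarrow> openin Y (N i) \<and> t i \<in> N i"
    and N_disjoint: "disjoint_family_on N I"
    using Hausdorff_space_disjoint_nbhds[OF assms(2-4), where U = "\<lambda>_. topspace Y"] assms(5)
    by (metis image_subset_iff openin_topspace)
  have "\<exists>V g. openin Y V \<and> t i \<in> V \<and> V \<subseteq> N i \<and> openin X (\<rho> ` V) \<and>
      homeomorphic_maps (subtopology Y V) (subtopology X (\<rho> ` V)) \<rho> g" if "i \<in> I" for i
    using local_homeo_sheet[OF \<rho>, of "N i" "t i"] N that by metis
  then obtain V g where V: "\<And>i. i \<in> I \<Longrightarrow> openin Y (V i) \<and> t i \<in> V i \<and> V i \<subseteq> N i \<and>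
      openin X (\<rho> ` V i) \<and> homeomorphic_maps (subtopology Y (V i)) (subtopology X (\<rho> ` V i)) \<rho> (g i)"
    by metis
  moreover have "disjoint_family_on V I"
    using N_disjoint V unfolding disjoint_family_on_def by blast
  ultimately show thesis
    using that by blast
qed

lemma in_topspace_conf_top:
  "t \<in> topspace (conf_top Y \<rho> m) \<longleftrightarrow> t \<in> extensional {..m} \<and> t ` {..m} \<subseteq> topspace Y \<and>
     inj_on t {..m} \<and> (\<forall>i\<le>m. \<forall>j\<le>m. \<rho> (t i) = \<rho> (t j))"
  unfolding conf_top_def by (auto simp: topspace_product_topology PiE_iff)

lemma continuous_map_conf_top_component:
  "i \<le> m \<Longrightarrow> continuous_map (conf_top Y \<rho> m) Y (\<lambda>t. t i)"
  unfolding conf_top_def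
  by (intro continuous_map_from_subtopology continuous_map_product_projection) simp

lemma conf_top_nbhd_box:
  assumes "openin (conf_top Y \<rho> m) G" and "t \<in> G"
  obtains U where "\<And>i. i \<le> m \<Longrightarrow> openin Y (U i) \<and> t i \<in> U i"
    and "\<And>s. \<lbrakk>s \<in> topspace (conf_top Y \<rho> m); \<And>i. i \<le> m \<Longrightarrow> s i \<in> U i\<rbrakk> \<Longrightarrow> s \<in> G"
proof -
  obtain G' where G': "openin (product_topology (\<lambda>i. Y) {..m}) G'"
    and G: "G = G' \<inter> {t. inj_on t {..m} \<and> (\<forall>i\<le>m. \<forall>j\<le>m. \<rho> (t i) = \<rho> (t j))}"
    using assms(1) unfolding conf_top_def openin_subtopology by blast
  have "t \<in> G'"
    using assms(2) G by blast
  then obtain U where U: "\<forall>i\<in>{..m}. openin Y (U i)" "t \<in> PiE {..m} U" "PiE {..m} U \<subseteq> G'"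
    using G' unfolding openin_product_topology_alt by blast
  show thesis
  proof
    show "openin Y (U i) \<and> t i \<in> U i" if "i \<le> m" for i
      using U(1,2) that by (auto simp: PiE_iff)
    fix s assume s: "s \<in> topspace (conf_top Y \<rho> m)" "\<And>i. i \<le> m \<Longrightarrow> s i \<in> U i"
    then have "s \<in> PiE {..m} U"
      by (auto simp: PiE_iff in_topspace_conf_top)
    then show "s \<in> G"
      using s(1) U(3) unfolding G in_topspace_conf_top by blast
  qed
qed

lemma conf_top_reorder:
  assumes t: "t \<in> topspace (conf_top Y \<rho> m)"
    and disj: "disjoint_family_on V {..m}"
    and meets: "\<And>i. i \<le> m \<Longrightarrow> t ` {..m} \<inter> V i \<noteq> {}"
  obtains s where "s \<in> topspace (conf_top Y \<rho> m)" "s ` {..m} = t ` {..m}" "\<And>i. i \<le> m \<Longrightarrow> s i \<in> V i"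
proof -
  have "\<exists>j. j \<le> m \<and> t j \<in> V i" if "i \<le> m" for i
    using meets[OF that] by auto
  then obtain k where k: "\<And>i. i \<le> m \<Longrightarrow> k i \<le> m \<and> t (k i) \<in> V i"
    by metis
  define s where "s = restrict (t \<circ> k) {..m}"
  have inj: "inj_on s {..m}"
  proof (rule inj_onI)
    fix i j assume ij: "i \<in> {..m}" "j \<in> {..m}" and "s i = s j"
    then have "t (k i) = t (k j)"
      by (simp add: s_def)
    then have "V i \<inter> V j \<noteq> {}"
      using k ij by (metis atMost_iff disjoint_iff)
    then show "i = j"
      using disj ij by (meson disjoint_family_onD)
  qed
  have sub: "s ` {..m} \<subseteq> t ` {..m}"
    using k by (auto simp: s_def)
  have t_props: "t ` {..m} \<subseteq> topspace Y" "inj_on t {..m}" "\<forall>i\<le>m. \<forall>j\<le>m. \<rho> (t i) = \<rho> (t j)"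
    using t unfolding in_topspace_conf_top by blast+
  have "card (s ` {..m}) = card (t ` {..m})"
    using inj t_props(2) by (simp add: card_image)
  then have img: "s ` {..m} = t ` {..m}"
    using sub by (simp add: card_subset_eq)
  have "s \<in> topspace (conf_top Y \<rho> m)"
    unfolding in_topspace_conf_top
  proof (intro conjI allI impI)
    show "s \<in> extensional {..m}"
      by (simp add: s_def)
    show "s ` {..m} \<subseteq> topspace Y"
      using sub t_props(1) by blast
    show "inj_on s {..m}"
      by (rule inj)
    show "\<rho> (s i) = \<rho> (s j)" if "i \<le> m" "j \<le> m" for i j
    proof -
      have "\<rho> (t (k i)) = \<rho> (t (k j))"
        using t_props(3) k that by blast
      then show ?thesis
        using that by (simp add: s_def)
    qed
  qed
  moreover have "s i \<in> V i" if "i \<le> m" for i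
    using that k by (simp add: s_def)
  ultimately show thesis
    using that img by blast
qed

lemma closedin_conf_top_simplices:
  assumes "H2 Y \<Delta>"
  shows "closedin (conf_top Y \<rho> m) {t \<in> topspace (conf_top Y \<rho> m). t ` {..m} \<in> \<Delta>}"
proof -
  let ?C = "conf_top Y \<rho> m"
  let ?S = "{t \<in> topspace ?C. t ` {..m} \<in> \<Delta>}"
  have "t \<in> ?S" if t: "t \<in> ?C closure_of ?S" for t
  proof -
    let ?F = "inf (nhdsin ?C t) (principal ?S)"
    have t_top: "t \<in> topspace ?C"
      using t in_closure_of by fast
    have "?F \<noteq> bot"
    proof
      assume "?F = bot"
      then have "eventually (\<lambda>_. False) ?F"
        by simp
      then have "eventually (\<lambda>s. s \<notin> ?S) (nhdsin ?C t)"
        unfolding eventually_inf_principal by simp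
      then show False
        using t t_top unfolding eventually_nhdsin in_closure_of by blast
    qed
    \<comment> \<open>Hypothesis (H2) speaks about nets of lists, so the tuples are read as lists.\<close>
    define L where "L s = map s [0..<Suc m]" for s :: "nat \<Rightarrow> 'a"
    have set_L: "set (L s) = s ` {..m}" and length_L: "length (L s) = Suc m" for s
      by (simp_all add: L_def atLeast0LessThan lessThan_Suc_atMost del: upt_Suc)
    have "set (L t) \<in> \<Delta>"
      using assms unfolding H2_def
    proof (elim allE[of _ "filtermap L ?F"] allE[of _ "L t"] mp, intro conjI allI impI)
      show "filtermap L ?F \<noteq> bot"
        using \<open>?F \<noteq> bot\<close> by (simp add: filtermap_bot_iff)
      show "eventually (\<lambda>l. length l = length (L t) \<and> set l \<in> \<Delta>) (filtermap L ?F)"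
        unfolding eventually_filtermap eventually_inf_principal by (simp add: set_L length_L)
      fix i assume "i < length (L t)"
      then have i: "i \<le> m" "\<And>s. L s ! i = s i"
        by (simp_all add: L_def less_Suc_eq_le del: upt_Suc)
      show "limitin Y (\<lambda>l. l ! i) (L t ! i) (filtermap L ?F)"
        using limitin_continuous_map_nhdsin[OF continuous_map_conf_top_component[OF i(1)] t_top]
        by (simp add: limitin_def eventually_filtermap i(2))
    qed
    then show ?thesis
      using t_top by (simp add: set_L)
  qed
  then show ?thesis
    unfolding closure_of_subset_eq[symmetric] by blast
qed

lemma dirac_avg_restrict: "dirac_avg Y m (restrict t {..m}) = dirac_avg Y m t"
  unfolding dirac_avg_def by simp

lemma A_top_eq_subtopology:
  "A_top Y X \<rho> m = subtopology
     (topology_generated_by {{\<mu>. integral\<^sup>L \<mu> f \<in> V} | f V. f \<in> Cc Y \<and> open V}) (A_set Y X \<rho> m)"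
  unfolding A_top_def PY_top_def subtopology_subtopology
  by (metis (no_types, lifting) A_set_def Int_absorb1 mem_Collect_eq subsetI)

lemma Union_weak_star_subbasis:
  "\<Union>{{\<mu>. integral\<^sup>L \<mu> f \<in> V} | f V. f \<in> Cc Y \<and> open V} = UNIV"
proof -
  have "(\<lambda>_. 0) \<in> Cc Y"
    by (simp add: Cc_def)
  then show ?thesis
    by blast
qed

lemma topspace_A_top [simp]: "topspace (A_top Y X \<rho> m) = A_set Y X \<rho> m"
  by (simp add: A_top_eq_subtopology Union_weak_star_subbasis)

lemma openin_A_top_integral:
  assumes "f \<in> Cc Y" and "open V"
  shows "openin (A_top Y X \<rho> m) (A_set Y X \<rho> m \<inter> {\<mu>. integral\<^sup>L \<mu> f \<in> V})"
  unfolding A_top_eq_subtopology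
  by (rule openin_subtopology_Int2, rule topology_generated_by_Basis) (use assms in blast)

lemma openin_B_top:
  "openin (B_top Y \<rho> m) U \<longleftrightarrow> U \<subseteq> conf_class m ` topspace (conf_top Y \<rho> m) \<and>
     openin (conf_top Y \<rho> m) {t \<in> topspace (conf_top Y \<rho> m). conf_class m t \<in> U}"
proof -
  let ?C = "conf_top Y \<rho> m"
  have "istopology (\<lambda>U. U \<subseteq> conf_class m ` topspace ?C \<and>
      openin ?C {t \<in> topspace ?C. conf_class m t \<in> U})"
    unfolding istopology_def
  proof (rule conjI; intro allI impI)
    fix S T :: "'a set set"
    assume "S \<subseteq> conf_class m ` topspace ?C \<and> openin ?C {t \<in> topspace ?C. conf_class m t \<in> S}"
      "T \<subseteq> conf_class m ` topspace ?C \<and> openin ?C {t \<in> topspace ?C. conf_class m t \<in> T}"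
    moreover have "{t \<in> topspace ?C. conf_class m t \<in> S \<inter> T} =
        {t \<in> topspace ?C. conf_class m t \<in> S} \<inter> {t \<in> topspace ?C. conf_class m t \<in> T}"
      by blast
    ultimately show "S \<inter> T \<subseteq> conf_class m ` topspace ?C \<and>
        openin ?C {t \<in> topspace ?C. conf_class m t \<in> S \<inter> T}"
      by auto
  next
    fix \<K> :: "'a set set set"
    assume "\<forall>K\<in>\<K>. K \<subseteq> conf_class m ` topspace ?C \<and> openin ?C {t \<in> topspace ?C. conf_class m t \<in> K}"
    moreover have "{t \<in> topspace ?C. conf_class m t \<in> \<Union>\<K>} =
        (\<Union>K\<in>\<K>. {t \<in> topspace ?C. conf_class m t \<in> K})"
      by blast
    ultimately show "\<Union>\<K> \<subseteq> conf_class m ` topspace ?C \<and>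
        openin ?C {t \<in> topspace ?C. conf_class m t \<in> \<Union>\<K>}"
      by (auto intro!: openin_Union)
  qed
  then show ?thesis
    unfolding B_top_def by simp
qed

lemma topspace_B_top: "topspace (B_top Y \<rho> m) = conf_class m ` topspace (conf_top Y \<rho> m)"
proof (rule subset_antisym)
  show "topspace (B_top Y \<rho> m) \<subseteq> conf_class m ` topspace (conf_top Y \<rho> m)"
    using openin_topspace[of "B_top Y \<rho> m"] unfolding openin_B_top by blast
  have "{t \<in> topspace (conf_top Y \<rho> m). conf_class m t \<in> conf_class m ` topspace (conf_top Y \<rho> m)}
      = topspace (conf_top Y \<rho> m)"
    by blast
  then have "openin (B_top Y \<rho> m) (conf_class m ` topspace (conf_top Y \<rho> m))"
    unfolding openin_B_top by simp
  then show "conf_class m ` topspace (conf_top Y \<rho> m) \<subseteq> topspace (B_top Y \<rho> m)"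
    by (rule openin_subset)
qed

lemma quotient_map_conf_class: "quotient_map (conf_top Y \<rho> m) (B_top Y \<rho> m) (conf_class m)"
  unfolding quotient_map_def topspace_B_top openin_B_top by auto

lemma dirac_avg_eq_iff_conf_class:
  assumes "Hausdorff_space Y" and "t \<in> topspace (conf_top Y \<rho> m)" and "s \<in> topspace (conf_top Y \<rho> m)"
  shows "dirac_avg Y m t = dirac_avg Y m s \<longleftrightarrow> conf_class m t = conf_class m s"
proof -
  have "t ` {..m} \<subseteq> topspace Y" "inj_on t {..m}" "s ` {..m} \<subseteq> topspace Y" "inj_on s {..m}"
    using assms(2,3) unfolding in_topspace_conf_top by blast+
  then show ?thesis
    unfolding conf_class_def by (rule dirac_avg_eq_iff[OF assms(1)])
qed

lemma supp_dirac_avg_conf_top: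
  "\<lbrakk>Hausdorff_space Y; t \<in> topspace (conf_top Y \<rho> m)\<rbrakk> \<Longrightarrow> supp Y (dirac_avg Y m t) = t ` {..m}"
  by (rule supp_dirac_avg) (auto simp: in_topspace_conf_top)

lemma integral_dirac_avg_conf_top:
  assumes "t \<in> topspace (conf_top Y \<rho> m)" and "continuous_map Y euclideanreal f"
  shows "integral\<^sup>L (dirac_avg Y m t) f = (\<Sum>i\<le>m. f (t i)) / real (Suc m)"
proof (rule integral_dirac_avg[OF _ assms(2)])
  show "t ` {..m} \<subseteq> topspace Y"
    using assms(1) unfolding in_topspace_conf_top by blast
qed

lemma phi_dirac_avg:
  assumes "Hausdorff_space Y" and t: "t \<in> topspace (conf_top Y \<rho> m)"
  shows "phi Y \<rho> m (dirac_avg Y m t) = conf_class m t"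
  unfolding phi_def
proof (rule the_equality)
  show "\<exists>s\<in>topspace (conf_top Y \<rho> m). dirac_avg Y m t = dirac_avg Y m s \<and> conf_class m t = conf_class m s"
    using t by blast
  fix b assume "\<exists>s\<in>topspace (conf_top Y \<rho> m). dirac_avg Y m t = dirac_avg Y m s \<and> b = conf_class m s"
  then show "b = conf_class m t"
    using dirac_avg_eq_iff_conf_class[OF assms(1) t] by metis
qed

lemma rho_tilde_dirac_avg_conf_top:
  assumes "Hausdorff_space X" and "continuous_map Y X \<rho>" and t: "t \<in> topspace (conf_top Y \<rho> m)"
  shows "rho_tilde Y X \<rho> (dirac_avg Y m t) = \<rho> (t 0)"
proof (rule rho_tilde_dirac_avg[OF assms(1,2)])
  show "t ` {..m} \<subseteq> topspace Y" "\<And>i. i \<le> m \<Longrightarrow> \<rho> (t i) = \<rho> (t 0)"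
    using t unfolding in_topspace_conf_top by blast+
qed

context
  fixes Y :: "'y topology" and X :: "'x topology" and \<rho> :: "'y \<Rightarrow> 'x" and m :: nat
  assumes Hausdorff: "Hausdorff_space Y" and \<rho>_maps: "\<rho> ` topspace Y \<subseteq> topspace X"
begin

lemma A_set_eq_dirac_avg_image: "A_set Y X \<rho> m = dirac_avg Y m ` topspace (conf_top Y \<rho> m)"
proof
  show "A_set Y X \<rho> m \<subseteq> dirac_avg Y m ` topspace (conf_top Y \<rho> m)"
  proof
    fix \<mu> assume "\<mu> \<in> A_set Y X \<rho> m"
    then obtain t x where t: "inj_on t {..m}" "t ` {..m} \<subseteq> topspace Y" and \<mu>: "\<mu> = dirac_avg Y m t"
      and "supp Y \<mu> \<subseteq> fibre Y \<rho> x"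
      unfolding A_set_def PY_def by blast
    then have fib: "\<And>i. i \<le> m \<Longrightarrow> \<rho> (t i) = x"
      using supp_dirac_avg[OF Hausdorff t(2)] by (auto simp: fibre_def)
    have "restrict t {..m} \<in> topspace (conf_top Y \<rho> m)"
      using t unfolding in_topspace_conf_top by (simp add: inj_on_def fib)
    then show "\<mu> \<in> dirac_avg Y m ` topspace (conf_top Y \<rho> m)"
      unfolding \<mu> by (metis dirac_avg_restrict image_eqI)
  qed
  show "dirac_avg Y m ` topspace (conf_top Y \<rho> m) \<subseteq> A_set Y X \<rho> m"
  proof clarify
    fix t assume "t \<in> topspace (conf_top Y \<rho> m)"
    then have t: "t ` {..m} \<subseteq> topspace Y" "inj_on t {..m}" and fib: "\<And>i. i \<le> m \<Longrightarrow> \<rho> (t i) = \<rho> (t 0)"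
      unfolding in_topspace_conf_top by blast+
    have "\<rho> (t 0) \<in> topspace X"
      using t(1) \<rho>_maps by auto
    then have "dirac_avg Y m t \<in> PY Y X \<rho>"
      using Hausdorff t(1) fib by (rule dirac_avg_in_PY[rotated 3])
    then show "dirac_avg Y m t \<in> A_set Y X \<rho> m"
      unfolding A_set_def using t by blast
  qed
qed

lemma phi_eq_supp:
  assumes "\<mu> \<in> A_set Y X \<rho> m"
  shows "phi Y \<rho> m \<mu> = supp Y \<mu>"
proof -
  obtain t where t: "t \<in> topspace (conf_top Y \<rho> m)" and \<mu>: "\<mu> = dirac_avg Y m t"
    using assms A_set_eq_dirac_avg_image by blast
  then have "t ` {..m} \<subseteq> topspace Y"
    unfolding in_topspace_conf_top by blast
  then show ?thesis
    using t by (simp add: \<mu> phi_dirac_avg[OF Hausdorff] supp_dirac_avg[OF Hausdorff] conf_class_def)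
qed

lemma inj_on_phi: "inj_on (phi Y \<rho> m) (A_set Y X \<rho> m)"
proof (rule inj_onI)
  fix \<mu> \<nu> assume "\<mu> \<in> A_set Y X \<rho> m" "\<nu> \<in> A_set Y X \<rho> m" and eq: "phi Y \<rho> m \<mu> = phi Y \<rho> m \<nu>"
  then obtain t s where "t \<in> topspace (conf_top Y \<rho> m)" "s \<in> topspace (conf_top Y \<rho> m)"
    and "\<mu> = dirac_avg Y m t" "\<nu> = dirac_avg Y m s"
    using A_set_eq_dirac_avg_image by blast
  then show "\<mu> = \<nu>"
    using eq by (simp add: phi_dirac_avg[OF Hausdorff] dirac_avg_eq_iff_conf_class[OF Hausdorff])
qed

lemma continuous_map_dirac_avg: "continuous_map (conf_top Y \<rho> m) (A_top Y X \<rho> m) (dirac_avg Y m)"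
  unfolding A_top_eq_subtopology continuous_map_in_subtopology
proof (intro conjI continuous_on_generated_topo)
  show "dirac_avg Y m \<in> topspace (conf_top Y \<rho> m) \<rightarrow> A_set Y X \<rho> m"
    using A_set_eq_dirac_avg_image by auto
  show "dirac_avg Y m ` topspace (conf_top Y \<rho> m) \<subseteq> \<Union>{{\<mu>. integral\<^sup>L \<mu> f \<in> V} | f V. f \<in> Cc Y \<and> open V}"
    by (simp add: Union_weak_star_subbasis)
  fix U assume "U \<in> {{\<mu>. integral\<^sup>L \<mu> f \<in> V} | f V. f \<in> Cc Y \<and> open V}"
  then obtain f V where U: "U = {\<mu>. integral\<^sup>L \<mu> f \<in> V}" and f: "continuous_map Y euclideanreal f"
    and "open V"
    by (auto simp: Cc_def)
  have "continuous_map (conf_top Y \<rho> m) euclideanreal (\<lambda>t. (\<Sum>i\<le>m. f (t i)) / real (Suc m))"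
    by (intro continuous_intros continuous_map_compose[OF continuous_map_conf_top_component f, unfolded o_def])
      auto
  then have "openin (conf_top Y \<rho> m) {t \<in> topspace (conf_top Y \<rho> m). (\<Sum>i\<le>m. f (t i)) / real (Suc m) \<in> V}"
    using \<open>open V\<close> by (simp add: openin_continuous_map_preimage)
  moreover have "integral\<^sup>L (dirac_avg Y m t) f = (\<Sum>i\<le>m. f (t i)) / real (Suc m)"
    if "t \<in> topspace (conf_top Y \<rho> m)" for t
    using that f by (rule integral_dirac_avg_conf_top)
  ultimately show "openin (conf_top Y \<rho> m) (dirac_avg Y m -` U \<inter> topspace (conf_top Y \<rho> m))"
    unfolding U by (simp add: vimage_def Int_def conj_commute cong: conj_cong)
qed

context
  assumes locally_compact: "locally_compact_space Y"
begin

lemma openin_A_top_supp_meets: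
  assumes "openin Y V"
  shows "openin (A_top Y X \<rho> m) {\<mu> \<in> A_set Y X \<rho> m. supp Y \<mu> \<inter> V \<noteq> {}}"
  unfolding openin_subopen[of _ "{\<mu> \<in> A_set Y X \<rho> m. supp Y \<mu> \<inter> V \<noteq> {}}"]
proof (intro ballI)
  fix \<mu> assume \<mu>: "\<mu> \<in> {\<mu> \<in> A_set Y X \<rho> m. supp Y \<mu> \<inter> V \<noteq> {}}"
  then obtain t where t: "t \<in> topspace (conf_top Y \<rho> m)" and \<mu>_eq: "\<mu> = dirac_avg Y m t"
    using A_set_eq_dirac_avg_image by auto
  have "supp Y \<mu> = t ` {..m}"
    using t by (simp add: \<mu>_eq supp_dirac_avg_conf_top[OF Hausdorff])
  then obtain j where j: "j \<le> m" "t j \<in> V"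
    using \<mu> by auto
  \<comment> \<open>A nonnegative bump at \<open>t j\<close> supported in \<open>V\<close>: a positive integral forces an atom in \<open>V\<close>.\<close>
  obtain f where f: "f \<in> Cc Y" "f (t j) > 0" "\<And>z. f z \<ge> 0" "\<And>z. \<lbrakk>z \<in> topspace Y; f z \<noteq> 0\<rbrakk> \<Longrightarrow> z \<in> V"
    using exists_Cc_bump[OF locally_compact Hausdorff assms] j by blast
  have f_cont: "continuous_map Y euclideanreal f"
    using f(1) by (simp add: Cc_def)
  let ?W = "A_set Y X \<rho> m \<inter> {\<nu>. integral\<^sup>L \<nu> f \<in> {0<..}}"
  have "openin (A_top Y X \<rho> m) ?W"
    using f(1) by (rule openin_A_top_integral) simp
  moreover have "\<mu> \<in> ?W"
  proof -
    have "0 < (\<Sum>i\<le>m. f (t i))"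
      using f j by (intro sum_pos2[of _ j]) auto
    then show ?thesis
      using \<mu> by (simp add: \<mu>_eq integral_dirac_avg_conf_top[OF t f_cont])
  qed
  moreover have "?W \<subseteq> {\<mu> \<in> A_set Y X \<rho> m. supp Y \<mu> \<inter> V \<noteq> {}}"
  proof
    fix \<nu> assume "\<nu> \<in> ?W"
    then have \<nu>: "\<nu> \<in> A_set Y X \<rho> m" "integral\<^sup>L \<nu> f > 0"
      by auto
    then obtain s where s: "s \<in> topspace (conf_top Y \<rho> m)" and \<nu>_eq: "\<nu> = dirac_avg Y m s"
      using A_set_eq_dirac_avg_image by auto
    have "(\<Sum>i\<le>m. f (s i)) \<noteq> 0"
      using \<nu>(2) by (auto simp: \<nu>_eq integral_dirac_avg_conf_top[OF s f_cont])
    then obtain i where "i \<le> m" "f (s i) \<noteq> 0"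
      by (meson atMost_iff sum.neutral)
    moreover have "supp Y \<nu> = s ` {..m}"
      using s by (simp add: \<nu>_eq supp_dirac_avg_conf_top[OF Hausdorff])
    moreover have "s ` {..m} \<subseteq> topspace Y"
      using s unfolding in_topspace_conf_top by blast
    ultimately show "\<nu> \<in> {\<mu> \<in> A_set Y X \<rho> m. supp Y \<mu> \<inter> V \<noteq> {}}"
      using \<nu>(1) f(4) by blast
  qed
  ultimately show "\<exists>W. openin (A_top Y X \<rho> m) W \<and> \<mu> \<in> W \<and> W \<subseteq> {\<mu> \<in> A_set Y X \<rho> m. supp Y \<mu> \<inter> V \<noteq> {}}"
    by blast
qed

lemma openin_A_top_supp_meets_all:
  assumes "\<And>i. i \<le> m \<Longrightarrow> openin Y (V i)"
  shows "openin (A_top Y X \<rho> m) {\<mu> \<in> A_set Y X \<rho> m. \<forall>i\<le>m. supp Y \<mu> \<inter> V i \<noteq> {}}"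
proof -
  have "{\<mu> \<in> A_set Y X \<rho> m. \<forall>i\<le>m. supp Y \<mu> \<inter> V i \<noteq> {}} =
      (\<Inter>i\<le>m. {\<mu> \<in> A_set Y X \<rho> m. supp Y \<mu> \<inter> V i \<noteq> {}})"
    by auto
  then show ?thesis
    using assms by (auto intro!: openin_INT2 openin_A_top_supp_meets)
qed

lemma dirac_avg_image_nbhd:
  assumes G: "openin (conf_top Y \<rho> m) G" and "t \<in> G"
  obtains W where "openin (A_top Y X \<rho> m) W" "dirac_avg Y m t \<in> W" "W \<subseteq> dirac_avg Y m ` G"
proof -
  obtain N where N: "\<And>i. i \<le> m \<Longrightarrow> openin Y (N i) \<and> t i \<in> N i"
    and box: "\<And>s. \<lbrakk>s \<in> topspace (conf_top Y \<rho> m); \<And>i. i \<le> m \<Longrightarrow> s i \<in> N i\<rbrakk> \<Longrightarrow> s \<in> G"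
    using conf_top_nbhd_box[OF assms] by blast
  have t: "t \<in> topspace (conf_top Y \<rho> m)"
    using assms by (meson openin_subset subsetD)
  then have "inj_on t {..m}"
    unfolding in_topspace_conf_top by blast
  then obtain V where V: "\<And>i. i \<in> {..m} \<Longrightarrow> openin Y (V i) \<and> t i \<in> V i \<and> V i \<subseteq> N i"
    and disj: "disjoint_family_on V {..m}"
    using Hausdorff_space_disjoint_nbhds[OF Hausdorff finite_atMost, where t = t and U = N] N by auto
  let ?W = "{\<mu> \<in> A_set Y X \<rho> m. \<forall>i\<le>m. supp Y \<mu> \<inter> V i \<noteq> {}}"
  have "openin (A_top Y X \<rho> m) ?W"
    using V by (intro openin_A_top_supp_meets_all) auto
  moreover have "dirac_avg Y m t \<in> ?W"
    using t V A_set_eq_dirac_avg_image by (auto simp: supp_dirac_avg_conf_top[OF Hausdorff])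
  moreover have "?W \<subseteq> dirac_avg Y m ` G"
  proof
    fix \<mu> assume \<mu>: "\<mu> \<in> ?W"
    then obtain s where s: "s \<in> topspace (conf_top Y \<rho> m)" "\<mu> = dirac_avg Y m s"
      using A_set_eq_dirac_avg_image by auto
    then have meets: "s ` {..m} \<inter> V i \<noteq> {}" if "i \<le> m" for i
      using \<mu> that by (simp add: supp_dirac_avg_conf_top[OF Hausdorff])
    \<comment> \<open>Each \<open>V i\<close> contains exactly one point of the support: reorder them to land in the box.\<close>
    obtain s' where s': "s' \<in> topspace (conf_top Y \<rho> m)" "s' ` {..m} = s ` {..m}" "\<And>i. i \<le> m \<Longrightarrow> s' i \<in> V i"
      using conf_top_reorder[OF s(1) disj meets] by blast
    then have "s' \<in> G"
      using box V by (meson atMost_iff subsetD)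
    moreover have "dirac_avg Y m s' = \<mu>"
      using s s' by (simp add: dirac_avg_eq_iff_conf_class[OF Hausdorff] conf_class_def)
    ultimately show "\<mu> \<in> dirac_avg Y m ` G"
      by blast
  qed
  ultimately show thesis
    using that by blast
qed

lemma open_map_dirac_avg: "open_map (conf_top Y \<rho> m) (A_top Y X \<rho> m) (dirac_avg Y m)"
  unfolding open_map_def
proof (intro allI impI)
  fix G assume G: "openin (conf_top Y \<rho> m) G"
  show "openin (A_top Y X \<rho> m) (dirac_avg Y m ` G)"
    unfolding openin_subopen[of _ "dirac_avg Y m ` G"]
  proof
    fix \<mu> assume "\<mu> \<in> dirac_avg Y m ` G"
    then obtain t where "t \<in> G" "\<mu> = dirac_avg Y m t"
      by blast
    then show "\<exists>W. openin (A_top Y X \<rho> m) W \<and> \<mu> \<in> W \<and> W \<subseteq> dirac_avg Y m ` G"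
      using dirac_avg_image_nbhd[OF G] by metis
  qed
qed

lemma quotient_map_dirac_avg: "quotient_map (conf_top Y \<rho> m) (A_top Y X \<rho> m) (dirac_avg Y m)"
  by (rule continuous_open_imp_quotient_map[OF continuous_map_dirac_avg open_map_dirac_avg])
    (simp add: A_set_eq_dirac_avg_image)

lemma homeomorphic_map_phi: "homeomorphic_map (A_top Y X \<rho> m) (B_top Y \<rho> m) (phi Y \<rho> m)"
proof -
  have "quotient_map (conf_top Y \<rho> m) (B_top Y \<rho> m) (phi Y \<rho> m \<circ> dirac_avg Y m)"
    by (rule quotient_map_eq[OF quotient_map_conf_class]) (simp add: phi_dirac_avg[OF Hausdorff])
  then have "quotient_map (A_top Y X \<rho> m) (B_top Y \<rho> m) (phi Y \<rho> m)"
    using quotient_map_compose_eq[OF quotient_map_dirac_avg] by blast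
  then show ?thesis
    unfolding homeomorphic_map_def using inj_on_phi by simp
qed

lemma closedin_A_top_geom_real:
  assumes "H2 Y \<Delta>"
  shows "closedin (A_top Y X \<rho> m) (A_set Y X \<rho> m \<inter> geom_real Y X \<rho> \<Delta>)"
proof -
  have phi_cont: "continuous_map (A_top Y X \<rho> m) (B_top Y \<rho> m) (phi Y \<rho> m)"
    using homeomorphic_map_phi by (rule homeomorphic_imp_continuous_map)
  have "{t \<in> topspace (conf_top Y \<rho> m). conf_class m t \<in> topspace (B_top Y \<rho> m) \<inter> \<Delta>} =
      {t \<in> topspace (conf_top Y \<rho> m). t ` {..m} \<in> \<Delta>}"
    unfolding topspace_B_top conf_class_def by blast
  then have "closedin (conf_top Y \<rho> m)
      {t \<in> topspace (conf_top Y \<rho> m). conf_class m t \<in> topspace (B_top Y \<rho> m) \<inter> \<Delta>}"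
    using closedin_conf_top_simplices[OF assms] by (simp only:)
  moreover have "topspace (B_top Y \<rho> m) \<inter> \<Delta> \<subseteq> topspace (B_top Y \<rho> m)"
    by (rule inf_le1)
  ultimately have "closedin (B_top Y \<rho> m) (topspace (B_top Y \<rho> m) \<inter> \<Delta>)"
    using quotient_map_conf_class[of Y \<rho> m] unfolding quotient_map_closedin by blast
  then have "closedin (A_top Y X \<rho> m)
      {\<mu> \<in> topspace (A_top Y X \<rho> m). phi Y \<rho> m \<mu> \<in> topspace (B_top Y \<rho> m) \<inter> \<Delta>}"
    by (rule closedin_continuous_map_preimage[OF phi_cont])
  moreover have "{\<mu> \<in> topspace (A_top Y X \<rho> m). phi Y \<rho> m \<mu> \<in> topspace (B_top Y \<rho> m) \<inter> \<Delta>} =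
      A_set Y X \<rho> m \<inter> geom_real Y X \<rho> \<Delta>"
  proof -
    have "phi Y \<rho> m \<mu> \<in> topspace (B_top Y \<rho> m)" if "\<mu> \<in> A_set Y X \<rho> m" for \<mu>
      using continuous_map_image_subset_topspace[OF phi_cont] that by auto
    moreover have "A_set Y X \<rho> m \<subseteq> PY Y X \<rho>"
      unfolding A_set_def by blast
    ultimately show ?thesis
      by (auto simp: phi_eq_supp geom_real_def)
  qed
  ultimately show ?thesis
    by simp
qed

end

end

lemma continuous_map_rho_tilde:
  assumes "locally_compact_space Y" and "Hausdorff_space Y" and "Hausdorff_space X"
    and \<rho>: "continuous_map Y X \<rho>"
  shows "continuous_map (A_top Y X \<rho> m) X (rho_tilde Y X \<rho>)"
proof (rule continuous_compose_quotient_map)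
  have \<rho>_maps: "\<rho> ` topspace Y \<subseteq> topspace X"
    using \<rho> by (rule continuous_map_image_subset_topspace)
  show "quotient_map (conf_top Y \<rho> m) (A_top Y X \<rho> m) (dirac_avg Y m)"
    by (rule quotient_map_dirac_avg[OF assms(2) \<rho>_maps assms(1)])
  show "continuous_map (conf_top Y \<rho> m) X (rho_tilde Y X \<rho> \<circ> dirac_avg Y m)"
    using continuous_map_compose[OF continuous_map_conf_top_component[OF le0, of Y \<rho>] \<rho>]
  proof (rule continuous_map_eq)
    fix x assume x: "x \<in> topspace (conf_top Y \<rho> m)"
    have "rho_tilde Y X \<rho> (dirac_avg Y m x) = \<rho> (x 0)"
      using assms(3) \<rho> x by (rule rho_tilde_dirac_avg_conf_top)
    then show "(\<rho> \<circ> (\<lambda>t. t 0)) x = (rho_tilde Y X \<rho> \<circ> dirac_avg Y m) x"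
      by simp
  qed
qed

context
  fixes Y :: "'y topology" and X :: "'x topology" and \<rho> :: "'y \<Rightarrow> 'x" and m :: nat
    and V :: "nat \<Rightarrow> 'y set" and g :: "nat \<Rightarrow> 'x \<Rightarrow> 'y"
  assumes sheet: "\<And>i. i \<le> m \<Longrightarrow> openin Y (V i) \<and>
      homeomorphic_maps (subtopology Y (V i)) (subtopology X (\<rho> ` V i)) \<rho> (g i)"
    and disjoint: "disjoint_family_on V {..m}"
begin

lemma sheet_section: "\<lbrakk>i \<le> m; x \<in> topspace X; x \<in> \<rho> ` V i\<rbrakk> \<Longrightarrow> g i x \<in> V i \<and> \<rho> (g i x) = x"
  using sheet unfolding homeomorphic_maps_def continuous_map_def by fastforce

lemma sheet_section_rho: "\<lbrakk>i \<le> m; y \<in> V i\<rbrakk> \<Longrightarrow> g i (\<rho> y) = y"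
  using sheet openin_subset unfolding homeomorphic_maps_def by fastforce

lemma sheet_section_in_conf_top:
  assumes "x \<in> topspace X" and "\<And>i. i \<le> m \<Longrightarrow> x \<in> \<rho> ` V i"
  shows "(\<lambda>i\<in>{..m}. g i x) \<in> topspace (conf_top Y \<rho> m)"
  unfolding in_topspace_conf_top
proof (intro conjI)
  have g: "g i x \<in> V i \<and> \<rho> (g i x) = x" if "i \<le> m" for i
    using sheet_section assms that by blast
  show "(\<lambda>i\<in>{..m}. g i x) ` {..m} \<subseteq> topspace Y"
    using g sheet openin_subset by fastforce
  show "inj_on (\<lambda>i\<in>{..m}. g i x) {..m}"
    using g disjoint by (intro inj_onI) (metis atMost_iff disjoint_family_onD disjoint_iff restrict_apply')
  show "\<forall>i\<le>m. \<forall>j\<le>m. \<rho> ((\<lambda>i\<in>{..m}. g i x) i) = \<rho> ((\<lambda>i\<in>{..m}. g i x) j)"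
    using g by simp
qed simp

lemma continuous_map_sheet_section:
  "continuous_map (subtopology X (\<Inter>i\<le>m. \<rho> ` V i)) (conf_top Y \<rho> m) (\<lambda>x. \<lambda>i\<in>{..m}. g i x)"
  unfolding conf_top_def continuous_map_in_subtopology
proof (intro conjI)
  show "continuous_map (subtopology X (\<Inter>i\<le>m. \<rho> ` V i)) (product_topology (\<lambda>i. Y) {..m})
      (\<lambda>x. \<lambda>i\<in>{..m}. g i x)"
    unfolding continuous_map_componentwise
  proof (intro conjI ballI)
    fix k assume k: "k \<in> {..m}"
    have "continuous_map (subtopology X (\<rho> ` V k)) Y (g k)"
      using sheet[of k] k unfolding homeomorphic_maps_def by (simp add: continuous_map_in_subtopology)
    then show "continuous_map (subtopology X (\<Inter>i\<le>m. \<rho> ` V i)) Y (\<lambda>x. (\<lambda>i\<in>{..m}. g i x) k)"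
      by (rule continuous_map_eq[OF continuous_map_from_subtopology_mono]) (use k in auto)
  qed auto
  show "(\<lambda>x. \<lambda>i\<in>{..m}. g i x) \<in> topspace (subtopology X (\<Inter>i\<le>m. \<rho> ` V i))
      \<rightarrow> {t. inj_on t {..m} \<and> (\<forall>i\<le>m. \<forall>j\<le>m. \<rho> (t i) = \<rho> (t j))}"
  proof
    fix x assume "x \<in> topspace (subtopology X (\<Inter>i\<le>m. \<rho> ` V i))"
    then have "(\<lambda>i\<in>{..m}. g i x) \<in> topspace (conf_top Y \<rho> m)"
      by (intro sheet_section_in_conf_top) auto
    then show "(\<lambda>i\<in>{..m}. g i x) \<in> {t. inj_on t {..m} \<and> (\<forall>i\<le>m. \<forall>j\<le>m. \<rho> (t i) = \<rho> (t j))}"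
      unfolding in_topspace_conf_top by blast
  qed
qed

lemma sheets_image_subset_topspace: "continuous_map Y X \<rho> \<Longrightarrow> (\<Inter>i\<le>m. \<rho> ` V i) \<subseteq> topspace X"
  using sheet[of 0] openin_subset continuous_map_image_subset_topspace by fastforce

lemma dirac_avg_sheet_section:
  assumes Hausdorff: "Hausdorff_space Y" and "Hausdorff_space X" and \<rho>: "continuous_map Y X \<rho>"
    and x: "x \<in> (\<Inter>i\<le>m. \<rho> ` V i)"
  shows "dirac_avg Y m (\<lambda>i\<in>{..m}. g i x) \<in> A_set Y X \<rho> m"
    and "\<forall>i\<le>m. supp Y (dirac_avg Y m (\<lambda>i\<in>{..m}. g i x)) \<inter> V i \<noteq> {}"
    and "rho_tilde Y X \<rho> (dirac_avg Y m (\<lambda>i\<in>{..m}. g i x)) = x"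
proof -
  have "x \<in> topspace X"
    using x sheets_image_subset_topspace[OF \<rho>] by blast
  then have g: "g i x \<in> V i \<and> \<rho> (g i x) = x" if "i \<le> m" for i
    using sheet_section that x by blast
  have conf: "(\<lambda>i\<in>{..m}. g i x) \<in> topspace (conf_top Y \<rho> m)"
    using x \<open>x \<in> topspace X\<close> by (intro sheet_section_in_conf_top) auto
  then show "dirac_avg Y m (\<lambda>i\<in>{..m}. g i x) \<in> A_set Y X \<rho> m"
    using A_set_eq_dirac_avg_image[OF Hausdorff continuous_map_image_subset_topspace[OF \<rho>]] by blast
  show "\<forall>i\<le>m. supp Y (dirac_avg Y m (\<lambda>i\<in>{..m}. g i x)) \<inter> V i \<noteq> {}"
    using g conf by (auto simp: supp_dirac_avg_conf_top[OF Hausdorff])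
  show "rho_tilde Y X \<rho> (dirac_avg Y m (\<lambda>i\<in>{..m}. g i x)) = x"
    using rho_tilde_dirac_avg_conf_top[OF assms(2) \<rho> conf] g[of 0] by simp
qed

lemma dirac_avg_sheet_section_rho_tilde:
  assumes Hausdorff: "Hausdorff_space Y" and "Hausdorff_space X" and \<rho>: "continuous_map Y X \<rho>"
    and \<mu>: "\<mu> \<in> A_set Y X \<rho> m" and meets: "\<forall>i\<le>m. supp Y \<mu> \<inter> V i \<noteq> {}"
  shows "rho_tilde Y X \<rho> \<mu> \<in> (\<Inter>i\<le>m. \<rho> ` V i)"
    and "dirac_avg Y m (\<lambda>i\<in>{..m}. g i (rho_tilde Y X \<rho> \<mu>)) = \<mu>"
proof -
  obtain s where s: "s \<in> topspace (conf_top Y \<rho> m)" "\<mu> = dirac_avg Y m s"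
    using \<mu> A_set_eq_dirac_avg_image[OF Hausdorff continuous_map_image_subset_topspace[OF \<rho>]] by auto
  then have "s ` {..m} \<inter> V i \<noteq> {}" if "i \<le> m" for i
    using meets that by (simp add: supp_dirac_avg_conf_top[OF Hausdorff])
  then obtain s' where s': "s' \<in> topspace (conf_top Y \<rho> m)" "s' ` {..m} = s ` {..m}"
    and V: "\<And>i. i \<le> m \<Longrightarrow> s' i \<in> V i"
    using conf_top_reorder[OF s(1) disjoint] by blast
  have \<mu>_eq: "\<mu> = dirac_avg Y m s'"
    using s s' by (simp add: dirac_avg_eq_iff_conf_class[OF Hausdorff] conf_class_def)
  define x where "x = \<rho> (s' 0)"
  have fib: "\<rho> (s' i) = x" if "i \<le> m" for i
    using s'(1) that unfolding in_topspace_conf_top x_def by blast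
  have "rho_tilde Y X \<rho> \<mu> = x"
    unfolding \<mu>_eq x_def by (rule rho_tilde_dirac_avg_conf_top[OF assms(2) \<rho> s'(1)])
  moreover have "x \<in> (\<Inter>i\<le>m. \<rho> ` V i)"
    using V fib by (auto intro!: image_eqI[where x = "s' _"])
  moreover have "(\<lambda>i\<in>{..m}. g i x) = s'"
  proof (rule extensionalityI[OF restrict_extensional])
    show "s' \<in> extensional {..m}"
      using s'(1) unfolding in_topspace_conf_top by blast
    show "(\<lambda>i\<in>{..m}. g i x) i = s' i" if "i \<in> {..m}" for i
      using that V fib sheet_section_rho by fastforce
  qed
  ultimately show "rho_tilde Y X \<rho> \<mu> \<in> (\<Inter>i\<le>m. \<rho> ` V i)"
    and "dirac_avg Y m (\<lambda>i\<in>{..m}. g i (rho_tilde Y X \<rho> \<mu>)) = \<mu>"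
    using \<mu>_eq by simp_all
qed

lemma homeomorphic_maps_rho_tilde_sheets:
  assumes "locally_compact_space Y" and Hausdorff: "Hausdorff_space Y" and "Hausdorff_space X"
    and \<rho>: "continuous_map Y X \<rho>"
  shows "homeomorphic_maps
      (subtopology (A_top Y X \<rho> m) {\<mu> \<in> A_set Y X \<rho> m. \<forall>i\<le>m. supp Y \<mu> \<inter> V i \<noteq> {}})
      (subtopology X (\<Inter>i\<le>m. \<rho> ` V i)) (rho_tilde Y X \<rho>) (\<lambda>x. dirac_avg Y m (\<lambda>i\<in>{..m}. g i x))"
proof -
  have "continuous_map (subtopology X (\<Inter>i\<le>m. \<rho> ` V i)) (A_top Y X \<rho> m) (\<lambda>x. dirac_avg Y m (\<lambda>i\<in>{..m}. g i x))"
    using continuous_map_compose[OF continuous_map_sheet_section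
        continuous_map_dirac_avg[OF Hausdorff continuous_map_image_subset_topspace[OF \<rho>]]]
    by (simp add: o_def)
  moreover have "continuous_map (A_top Y X \<rho> m) X (rho_tilde Y X \<rho>)"
    using assms by (rule continuous_map_rho_tilde)
  ultimately show ?thesis
    unfolding homeomorphic_maps_def
    using dirac_avg_sheet_section[OF assms(2-4)] dirac_avg_sheet_section_rho_tilde[OF assms(2-4)]
      sheets_image_subset_topspace[OF \<rho>]
    by (auto simp: continuous_map_in_subtopology Int_absorb1 intro: continuous_map_from_subtopology)
qed

end

lemma local_homeo_rho_tilde:
  assumes "locally_compact_space Y" and Hausdorff: "Hausdorff_space Y" and "Hausdorff_space X"
    and \<rho>: "local_homeo Y X \<rho>"
  shows "local_homeo (A_top Y X \<rho> m) X (rho_tilde Y X \<rho>)"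
  unfolding local_homeo_def
proof (intro conjI ballI)
  have \<rho>_cont: "continuous_map Y X \<rho>"
    using \<rho> by (rule local_homeo_imp_continuous_map)
  then have \<rho>_maps: "\<rho> ` topspace Y \<subseteq> topspace X"
    by (rule continuous_map_image_subset_topspace)
  show "rho_tilde Y X \<rho> ` topspace (A_top Y X \<rho> m) \<subseteq> topspace X"
    using continuous_map_rho_tilde[OF assms(1-3) \<rho>_cont] by (rule continuous_map_image_subset_topspace)
  fix \<mu>\<^sub>0 assume "\<mu>\<^sub>0 \<in> topspace (A_top Y X \<rho> m)"
  then obtain t\<^sub>0 where t\<^sub>0: "t\<^sub>0 \<in> topspace (conf_top Y \<rho> m)" "\<mu>\<^sub>0 = dirac_avg Y m t\<^sub>0"
    using A_set_eq_dirac_avg_image[OF Hausdorff \<rho>_maps] by auto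
  then have t\<^sub>0_inj: "inj_on t\<^sub>0 {..m}" and t\<^sub>0_top: "t\<^sub>0 ` {..m} \<subseteq> topspace Y"
    unfolding in_topspace_conf_top by blast+
  obtain V g where V: "\<And>i. i \<in> {..m} \<Longrightarrow> openin Y (V i) \<and> t\<^sub>0 i \<in> V i \<and> openin X (\<rho> ` V i) \<and>
      homeomorphic_maps (subtopology Y (V i)) (subtopology X (\<rho> ` V i)) \<rho> (g i)"
    and disjoint: "disjoint_family_on V {..m}"
    using local_homeo_disjoint_sheets[OF \<rho> Hausdorff finite_atMost t\<^sub>0_inj t\<^sub>0_top] by blast
  let ?W = "{\<mu> \<in> A_set Y X \<rho> m. \<forall>i\<le>m. supp Y \<mu> \<inter> V i \<noteq> {}}"
  let ?O = "\<Inter>i\<le>m. \<rho> ` V i"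
  have "homeomorphic_maps (subtopology (A_top Y X \<rho> m) ?W) (subtopology X ?O)
      (rho_tilde Y X \<rho>) (\<lambda>x. dirac_avg Y m (\<lambda>i\<in>{..m}. g i x))"
    using V disjoint by (intro homeomorphic_maps_rho_tilde_sheets assms \<rho>_cont) auto
  then have hom: "homeomorphic_map (subtopology (A_top Y X \<rho> m) ?W) (subtopology X ?O) (rho_tilde Y X \<rho>)"
    by (rule homeomorphic_maps_imp_map)
  have "?W \<subseteq> topspace (A_top Y X \<rho> m)" "?O \<subseteq> topspace X"
    using V openin_subset by fastforce+
  then have image: "rho_tilde Y X \<rho> ` ?W = ?O"
    using homeomorphic_imp_surjective_map[OF hom] by (simp add: Int_absorb1)
  have "openin (A_top Y X \<rho> m) ?W"
    using V by (intro openin_A_top_supp_meets_all[OF Hausdorff \<rho>_maps assms(1)]) auto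
  moreover have "\<mu>\<^sub>0 \<in> ?W"
    using t\<^sub>0 V A_set_eq_dirac_avg_image[OF Hausdorff \<rho>_maps] by (auto simp: supp_dirac_avg_conf_top[OF Hausdorff])
  moreover have "openin X ?O"
    using V by (intro openin_INT2) auto
  ultimately show "\<exists>U. openin (A_top Y X \<rho> m) U \<and> \<mu>\<^sub>0 \<in> U \<and> openin X (rho_tilde Y X \<rho> ` U) \<and>
      homeomorphic_map (subtopology (A_top Y X \<rho> m) U) (subtopology X (rho_tilde Y X \<rho> ` U)) (rho_tilde Y X \<rho>)"
    using hom by (intro exI[of _ ?W]) (simp add: image)
qed

theorem proposition3p14:
  fixes Y :: "'y topology" and X :: "'x topology" and \<rho> :: "'y \<Rightarrow> 'x" and m :: nat
  assumes "locally_compact_space Y" and "Hausdorff_space Y"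
    and "locally_compact_space X" and "Hausdorff_space X"
    and "local_homeo Y X \<rho>"
  shows "homeomorphic_map (A_top Y X \<rho> m) (B_top Y \<rho> m) (phi Y \<rho> m) \<and>
         local_homeo (A_top Y X \<rho> m) X (rho_tilde Y X \<rho>) \<and>
         (\<forall>\<Delta>. X_simplicial_complex Y \<rho> \<Delta> \<and> H2 Y \<Delta> \<longrightarrow>
           closedin (A_top Y X \<rho> m) (A_set Y X \<rho> m \<inter> geom_real Y X \<rho> \<Delta>))"
proof -
  have \<rho>_maps: "\<rho> ` topspace Y \<subseteq> topspace X"
    using local_homeo_imp_continuous_map[OF assms(5)] by (rule continuous_map_image_subset_topspace)
  show ?thesis
    using homeomorphic_map_phi[OF assms(2) \<rho>_maps assms(1)]
      local_homeo_rho_tilde[OF assms(1,2,4,5)]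
      closedin_A_top_geom_real[OF assms(2) \<rho>_maps assms(1)]
    by blast
qed

end
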